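(* Let $V$ be the set of integer points $(x,y,z)\in\mathbb{Z}^3$ such that none of $x\pm y,\ y\pm z,\ z\pm x$ is congruent to $0\pmod 4$, let $G$ be the graph on $V$ with two vertices adjacent exactly when their Euclidean distance is $\sqrt2$, let $O=(0,1,2)$, and let $\operatorname{dis}(P)$ be the graph distance in $G$ from $O$ to $P$. Let $\mathcal U=\{(x,y,z): x\ge y\ge z\ge 0\}$. For integers $n$ define $S(n)=\#\{P\in V:\operatorname{dis}(P)=n\}$, $\bar S(n)=\#\{P=(x,y,z)\in V:\operatorname{dis}(P)=n,\ xyz=0\}$, $S_2(n)=\#\{P\in V\cap\mathcal U:\operatorname{dis}(P)=n\}$, $\bar S_1(n)=\#\{P=(x,y,z)\in V\cap\mathcal U:\operatorname{dis}(P)=n,\ xyz=0\}$ (all equal to $0$ for $n<0$). Then there are finitely many constants $a_j,b_j,c_j$ (indexed by integers $j$) such that for all $n$, $$\bar S(n)=\sum_j a_j\,\bar S_1(n+j),\qquad S(n)=\sum_j b_j\,\bar S_1(n+j)+\sum_j c_j\,S_2(n+j).$$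
   Context: $G$ is the sodalite network: the edge-skeleton of the uniform tiling of 3-space by truncated octahedra, scaled by a factor 4; $\operatorname{dis}$ is called the height. *)

theory Defs
  imports Complex_Main
begin

type_synonym pt = "int \<times> int \<times> int"

definition sodV :: "pt set" where
  "sodV = {(x,y,z). \<not> (4 dvd (x+y)) \<and> \<not> (4 dvd (x-y)) \<and> \<not> (4 dvd (y+z)) \<and>
                    \<not> (4 dvd (y-z)) \<and> \<not> (4 dvd (z+x)) \<and> \<not> (4 dvd (z-x))}"

definition sod_adj :: "pt \<Rightarrow> pt \<Rightarrow> bool" where
  "sod_adj P Q = (P \<in> sodV \<and> Q \<in> sodV \<and>
     (case P of (x1,y1,z1) \<Rightarrow> case Q of (x2,y2,z2) \<Rightarrow>
        (x1-x2)^2 + (y1-y2)^2 + (z1-z2)^2 = (2::int)))"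

definition sodO :: pt where "sodO = (0,1,2)"

inductive walk :: "nat \<Rightarrow> pt \<Rightarrow> bool" where
  walk0: "sodO \<in> sodV \<Longrightarrow> walk 0 sodO"
| walkS: "walk n P \<Longrightarrow> sod_adj P Q \<Longrightarrow> walk (Suc n) Q"

definition dis_eq :: "pt \<Rightarrow> int \<Rightarrow> bool" where
  "dis_eq P n = (0 \<le> n \<and> walk (nat n) P \<and> (\<forall>m < nat n. \<not> walk m P))"

definition sodU :: "pt set" where
  "sodU = {(x,y,z). x \<ge> y \<and> y \<ge> z \<and> z \<ge> 0}"

definition S :: "int \<Rightarrow> nat" where
  "S n = card {P \<in> sodV. dis_eq P n}"

definition Sbar :: "int \<Rightarrow> nat" where
  "Sbar n = card {P \<in> sodV. dis_eq P n \<and> fst P * fst (snd P) * snd (snd P) = 0}"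

definition S2 :: "int \<Rightarrow> nat" where
  "S2 n = card {P \<in> sodV \<inter> sodU. dis_eq P n}"

definition Sbar1 :: "int \<Rightarrow> nat" where
  "Sbar1 n = card {P \<in> sodV \<inter> sodU. dis_eq P n \<and> fst P * fst (snd P) * snd (snd P) = 0}"

end

theory Submission
  imports Defs
begin

text \<open>
  Signed permutations of the coordinates are automorphisms of \<open>G\<close>, and every vertex is an
  image \<open>g P\<close> of a point \<open>P\<close> of the chamber \<open>V \<inter> U\<close> (where \<open>x > y > z \<ge> 0\<close>).
  The potential \<open>height2 (x,y,z) = 2x + y + \<epsilon>\<close>, with \<open>\<epsilon> \<in> {-1,0,1}\<close> depending on the residues
  mod 4, grows by at most 2 along an edge; this bounds \<open>dis (g P)\<close> from below by
  \<open>height2 P / 2 + sp_offset g\<close>. Conversely, from every chamber point other than \<open>(2,1,0)\<close> an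
  edge inside the chamber lowers \<open>height2\<close> by 2, and the images of \<open>(2,1,0)\<close> are joined to
  \<open>O\<close> by explicit shortest paths, so the bound is attained.
  Counting the vertices of height \<open>n\<close> orbit by orbit therefore expresses \<open>S\<close> and \<open>Sbar\<close> through
  shifts of \<open>S2\<close> and \<open>Sbar1\<close> by the offsets. The \<open>Sbar1\<close> terms arise because chamber points
  with \<open>z = 0\<close> are fixed by the sign change of \<open>z\<close>.
\<close>

lemma sum_group_by_shift:
  fixes F :: "int \<Rightarrow> real"
  assumes "finite G"
  shows "(\<Sum>g\<in>G. w g * F (n - h g)) = (\<Sum>j\<in>uminus ` h ` G. (\<Sum>g\<in>{g\<in>G. - h g = j}. w g) * F (n + j))"
proof -
  have "(\<Sum>g\<in>G. w g * F (n - h g)) = (\<Sum>j\<in>(\<lambda>g. - h g) ` G. \<Sum>g\<in>{g\<in>G. - h g = j}. w g * F (n - h g))"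
    using assms by (rule sum.image_gen)
  also have "\<dots> = (\<Sum>j\<in>(\<lambda>g. - h g) ` G. (\<Sum>g\<in>{g\<in>G. - h g = j}. w g) * F (n + j))"
    by (intro sum.cong refl) (auto simp: sum_distrib_right)
  finally show ?thesis by (simp add: image_image)
qed

section \<open>Edges and residues mod 4\<close>

definition edge_vectors :: "pt set" where
  "edge_vectors = {(1,1,0),(1,-1,0),(-1,1,0),(-1,-1,0),(1,0,1),(1,0,-1),(-1,0,1),(-1,0,-1),
                   (0,1,1),(0,1,-1),(0,-1,1),(0,-1,-1)}"

lemma sum_squares_eq_2_iff: "a\<^sup>2 + b\<^sup>2 + c\<^sup>2 = (2::int) \<longleftrightarrow> (a,b,c) \<in> edge_vectors"
proof
  assume sq: "a\<^sup>2 + b\<^sup>2 + c\<^sup>2 = 2"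
  have unit: "t \<in> {-1,0,1}" if "t\<^sup>2 \<le> (2::int)" for t
  proof -
    have "\<bar>t\<bar> < 2"
      using that power_mono[of 2 "\<bar>t\<bar>" 2] by (cases "\<bar>t\<bar> < 2") auto
    then show ?thesis by auto
  qed
  have "a \<in> {-1,0,1}" "b \<in> {-1,0,1}" "c \<in> {-1,0,1}"
    using sq zero_le_power2[of a] zero_le_power2[of b] zero_le_power2[of c] by (intro unit; linarith)+
  then show "(a,b,c) \<in> edge_vectors" using sq unfolding edge_vectors_def by (elim insertE emptyE) simp_all
qed (simp add: edge_vectors_def; elim disjE; simp)

lemma sod_adj_iff:
  "sod_adj (x,y,z) Q \<longleftrightarrow> (x,y,z) \<in> sodV \<and> Q \<in> sodV \<and> (\<exists>(a,b,c)\<in>edge_vectors. Q = (x+a,y+b,z+c))"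
proof (cases Q)
  case (fields x' y' z')
  have "(x-x')\<^sup>2 + (y-y')\<^sup>2 + (z-z')\<^sup>2 = 2 \<longleftrightarrow> (x'-x, y'-y, z'-z) \<in> edge_vectors"
    unfolding sum_squares_eq_2_iff[symmetric] by (simp add: power2_commute)
  moreover have "(x'-x, y'-y, z'-z) \<in> edge_vectors \<longleftrightarrow> (\<exists>(a,b,c)\<in>edge_vectors. Q = (x+a,y+b,z+c))"
    unfolding fields by force
  ultimately show ?thesis
    unfolding fields sod_adj_def by simp
qed

lemma sod_adj_sym: "sod_adj P Q \<Longrightarrow> sod_adj Q P"
  unfolding sod_adj_def by (auto split: prod.splits simp: power2_commute)

lemma sodV_mod4: "(x,y,z) \<in> sodV \<longleftrightarrow> (x mod 4, y mod 4, z mod 4) \<in> sodV"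
  unfolding sodV_def by (simp add: dvd_eq_mod_eq_0 mod_add_eq mod_diff_eq)

definition residue_classes :: "pt set" where
  "residue_classes = {(0,1,2),(0,2,1),(0,2,3),(0,3,2),(1,0,2),(1,2,0),
                      (2,0,1),(2,0,3),(2,1,0),(2,3,0),(3,0,2),(3,2,0)}"

lemma mod4_cases: "(x::int) mod 4 = 0 \<or> x mod 4 = 1 \<or> x mod 4 = 2 \<or> x mod 4 = 3"
  by arith

lemma sodV_residue_classes: "(x,y,z) \<in> sodV \<Longrightarrow> (x mod 4, y mod 4, z mod 4) \<in> residue_classes"
  using mod4_cases[of x] mod4_cases[of y] mod4_cases[of z]
  by (subst (asm) sodV_mod4) (elim disjE; simp add: residue_classes_def sodV_def)

lemma sodV_shift_iff:
  "(x+a, y+b, z+c) \<in> sodV \<longleftrightarrow> ((x mod 4 + a) mod 4, (y mod 4 + b) mod 4, (z mod 4 + c) mod 4) \<in> sodV"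
  by (subst sodV_mod4) (simp add: mod_add_left_eq)

section \<open>The height potential\<close>

definition height_corr :: "int \<Rightarrow> int \<Rightarrow> int" where
  "height_corr x y = (if even y then 0 else if (y - x) mod 4 = 1 then -1 else 1)"

fun height2 :: "pt \<Rightarrow> int" where
  "height2 (x,y,z) = 2*x + y + height_corr x y"

lemma height_corr_mod4: "height_corr x y = height_corr (x mod 4) (y mod 4)"
proof -
  have "even y \<longleftrightarrow> even (y mod 4)" by (metis dvd_mod_iff even_numeral)
  then show ?thesis unfolding height_corr_def by (simp add: mod_diff_eq)
qed

lemma height2_shift:
  "height2 (x+a, y+b, z+c) = height2 (x,y,z) + 2*a + b
     + height_corr ((x mod 4 + a) mod 4) ((y mod 4 + b) mod 4) - height_corr (x mod 4) (y mod 4)"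
  by (simp add: height_corr_mod4[of "x+a"] height_corr_mod4[of x] mod_add_left_eq)

lemma height2_even: "even (height2 P)"
  by (cases P) (auto simp: height_corr_def)

lemma height2_adj_le: assumes "sod_adj P Q" shows "height2 Q \<le> height2 P + 2"
proof -
  \<comment> \<open>the increment depends only on the residues mod 4 and the edge vector\<close>
  have table: "\<forall>(r,s,t)\<in>residue_classes. \<forall>(a,b,c)\<in>edge_vectors.
      ((r + a) mod 4, (s + b) mod 4, (t + c) mod 4) \<in> sodV \<longrightarrow>
      2*a + b + height_corr ((r + a) mod 4) ((s + b) mod 4) - height_corr r s \<le> 2"
    unfolding residue_classes_def edge_vectors_def by (simp add: sodV_def height_corr_def)
  obtain x y z where P: "P = (x,y,z)" by (cases P)
  then obtain a b c where d: "(a,b,c) \<in> edge_vectors" and Q: "Q = (x+a,y+b,z+c)"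
    and V: "(x,y,z) \<in> sodV" "(x+a,y+b,z+c) \<in> sodV"
    using assms sod_adj_iff by auto
  show ?thesis
    using table sodV_residue_classes[OF V(1)] d V(2) unfolding P Q height2_shift sodV_shift_iff by fastforce
qed

section \<open>The chamber\<close>

abbreviation chamber :: "pt set" where
  "chamber \<equiv> sodV \<inter> sodU"

lemma sodV_abs_distinct:
  assumes "(x,y,z) \<in> sodV" shows "\<bar>x\<bar> \<noteq> \<bar>y\<bar>" "\<bar>y\<bar> \<noteq> \<bar>z\<bar>" "\<bar>x\<bar> \<noteq> \<bar>z\<bar>"
  using assms unfolding sodV_def by (auto simp: abs_eq_iff)

lemma chamber_strict: assumes "(x,y,z) \<in> chamber" shows "y < x" "z < y" "0 \<le> z"
  using assms sodV_abs_distinct[of x y z] unfolding sodU_def by auto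

lemma height2_chamber_ge: assumes "(x,y,z) \<in> chamber" shows "6 \<le> height2 (x,y,z)"
  using chamber_strict[OF assms] by (cases "x = 2 \<and> y = 1") (auto simp: height_corr_def)

lemma chamber_descent:
  assumes P: "(x,y,z) \<in> chamber" and "(x,y,z) \<noteq> (2,1,0)"
  obtains Q where "Q \<in> chamber" "sod_adj Q (x,y,z)" "height2 Q = height2 (x,y,z) - 2"
proof -
  let ?descends = "\<lambda>Q. Q \<in> chamber \<and> sod_adj Q (x,y,z) \<and> height2 Q = height2 (x,y,z) - 2"
  have descend_by: "\<exists>Q. ?descends Q"
    if h: "(x mod 4, y mod 4, z mod 4) = (r,s,t)" "(a,b,c) \<in> edge_vectors"
       "((r + a) mod 4, (s + b) mod 4, (t + c) mod 4) \<in> sodV"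
       "2*a + b + height_corr ((r + a) mod 4) ((s + b) mod 4) = height_corr r s - 2"
       "y+b \<le> x+a" "z+c \<le> y+b" "0 \<le> z+c" for r s t a b c
  proof (intro exI conjI)
    have res: "x mod 4 = r" "y mod 4 = s" "z mod 4 = t" using h(1) by simp_all
    have "(x+a,y+b,z+c) \<in> sodV" using h(3) unfolding sodV_shift_iff res .
    then show V: "(x+a,y+b,z+c) \<in> chamber" using h(5-7) by (simp add: sodU_def)
    show "sod_adj (x+a,y+b,z+c) (x,y,z)"
    proof (rule sod_adj_sym)
      show "sod_adj (x,y,z) (x+a,y+b,z+c)" unfolding sod_adj_iff using P V h(2) by blast
    qed
    show "height2 (x+a,y+b,z+c) = height2 (x,y,z) - 2"
      unfolding height2_shift res using h(4) by linarith
  qed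
  note step_simps = edge_vectors_def sodV_def height_corr_def
  have "(x mod 4, y mod 4, z mod 4) \<in> residue_classes"
    using P by (intro sodV_residue_classes) simp
  moreover have "y \<le> x" "z \<le> y" "0 \<le> z" using P unfolding sodU_def by auto
  ultimately have "\<exists>Q. ?descends Q"
    using assms(2) unfolding residue_classes_def
    \<comment> \<open>one step per residue class, in the order of \<open>residue_classes\<close>; only in the class
      \<open>(2,1,0)\<close> does the step depend on more than the residues\<close>
    apply (elim insertE emptyE)
    subgoal by (rule descend_by[where a="-1" and b="-1" and c=0]) (assumption | simp add: step_simps | presburger)+
    subgoal by (rule descend_by[where a="-1" and b=0 and c="-1"]) (assumption | simp add: step_simps | presburger)+
    subgoal by (rule descend_by[where a="-1" and b=0 and c=1]) (assumption | simp add: step_simps | presburger)+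
    subgoal by (rule descend_by[where a=0 and b="-1" and c="-1"]) (assumption | simp add: step_simps | presburger)+
    subgoal by (rule descend_by[where a="-1" and b="-1" and c=0]) (assumption | simp add: step_simps | presburger)+
    subgoal by (rule descend_by[where a="-1" and b=0 and c=1]) (assumption | simp add: step_simps | presburger)+
    subgoal by (rule descend_by[where a="-1" and b=0 and c=1]) (assumption | simp add: step_simps | presburger)+
    subgoal by (rule descend_by[where a="-1" and b=0 and c="-1"]) (assumption | simp add: step_simps | presburger)+
    subgoal
      apply (cases "y = x - 1")
       apply (cases "z = 0")
        subgoal by (rule descend_by[where a=0 and b="-1" and c=1]) (assumption | simp add: step_simps | presburger)+
        subgoal by (rule descend_by[where a=0 and b="-1" and c="-1"]) (assumption | simp add: step_simps | presburger)+
       subgoal by (rule descend_by[where a="-1" and b=1 and c=0]) (assumption | simp add: step_simps | presburger)+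
      done
    subgoal by (rule descend_by[where a="-1" and b="-1" and c=0]) (assumption | simp add: step_simps | presburger)+
    subgoal by (rule descend_by[where a="-1" and b=0 and c="-1"]) (assumption | simp add: step_simps | presburger)+
    subgoal by (rule descend_by[where a="-1" and b="-1" and c=0]) (assumption | simp add: step_simps | presburger)+
    done
  with that show thesis by blast
qed

section \<open>Signed permutations\<close>

type_synonym signed_perm = "nat \<times> int \<times> int \<times> int"

fun sp_apply :: "signed_perm \<Rightarrow> pt \<Rightarrow> pt" where
  "sp_apply (p,a,b,c) (x,y,z) =
    (if p = 0 then (a*x, b*y, c*z) else if p = 1 then (a*x, b*z, c*y)
     else if p = 2 then (a*y, b*x, c*z) else if p = 3 then (a*y, b*z, c*x)
     else if p = 4 then (a*z, b*x, c*y) else (a*z, b*y, c*x))"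

fun sp_inv :: "signed_perm \<Rightarrow> signed_perm" where
  "sp_inv (p,a,b,c) =
    (if p = 0 then (0,a,b,c) else if p = 1 then (1,a,c,b) else if p = 2 then (2,b,a,c)
     else if p = 3 then (4,c,a,b) else if p = 4 then (3,b,c,a) else (5,c,b,a))"

text \<open>The offsets are the distances \<open>dis (g (2,1,0)) - 3\<close>; see \<open>walk_base_orbit\<close>.\<close>

fun sp_offset :: "signed_perm \<Rightarrow> int" where
  "sp_offset (p,a,b,c) =
    (if p = 0 then 0 else if p = 1 then -c else if p = 2 then -b else if p = 3 then -2*c
     else if p = 4 then -(b+c) else -(2*c+b))"

fun sp_zsign :: "signed_perm \<Rightarrow> int" where
  "sp_zsign (p,a,b,c) = (if p = 0 \<or> p = 2 then c else if p = 1 \<or> p = 3 then b else a)"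

definition signed_perm_list :: "signed_perm list" where
  "signed_perm_list = [(p,a,b,c). p \<leftarrow> [0..<6], a \<leftarrow> [-1,1], b \<leftarrow> [-1,1], c \<leftarrow> [-1,1]]"

definition signed_perms :: "signed_perm set" where
  "signed_perms = set signed_perm_list"

lemma signed_permsE:
  assumes "g \<in> signed_perms"
  obtains p a b c where "g = (p,a,b,c)" "p \<in> {0,1,2,3,4,5}" "a \<in> {-1,1}" "b \<in> {-1,1}" "c \<in> {-1,1}"
proof -
  obtain p a b c where "g = (p,a,b,c)" "p < 6" "a \<in> {-1,1}" "b \<in> {-1,1}" "c \<in> {-1,1}"
    using assms unfolding signed_perms_def signed_perm_list_def by auto
  moreover have "p \<in> {0,1,2,3,4,5}" if "p < (6::nat)" for p using that by auto
  ultimately show thesis using that by blast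
qed

lemma sp_inv_mem: "g \<in> signed_perms \<Longrightarrow> sp_inv g \<in> signed_perms"
  unfolding signed_perms_def signed_perm_list_def by auto

lemma sp_inv_apply: assumes "g \<in> signed_perms" shows "sp_apply (sp_inv g) (sp_apply g P) = P"
proof -
  obtain p a b c where "g = (p,a,b,c)" "p \<in> {0,1,2,3,4,5}" "a \<in> {-1,1}" "b \<in> {-1,1}" "c \<in> {-1,1}"
    using assms by (rule signed_permsE)
  then show ?thesis by (cases P) auto
qed

lemma sp_apply_sodV: assumes "g \<in> signed_perms" "P \<in> sodV" shows "sp_apply g P \<in> sodV"
proof -
  obtain p a b c where g: "g = (p,a,b,c)" "p \<in> {0,1,2,3,4,5}" "a \<in> {-1,1}" "b \<in> {-1,1}" "c \<in> {-1,1}"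
    using assms(1) by (rule signed_permsE)
  obtain x y z where P: "P = (x,y,z)" by (cases P)
  show ?thesis
    using g(2-5) assms(2) unfolding g(1) P sodV_def by (elim insertE emptyE; simp; presburger)
qed

lemma sp_apply_sq_dist:
  assumes "g \<in> signed_perms"
  shows "(case sp_apply g (x,y,z) of (x1,y1,z1) \<Rightarrow> case sp_apply g (x',y',z') of (x2,y2,z2) \<Rightarrow>
            (x1-x2)\<^sup>2 + (y1-y2)\<^sup>2 + (z1-z2)\<^sup>2) = (x-x')\<^sup>2 + (y-y')\<^sup>2 + (z-z')\<^sup>2"
proof -
  obtain p a b c where g: "g = (p,a,b,c)" "p \<in> {0,1,2,3,4,5}" "a \<in> {-1,1}" "b \<in> {-1,1}" "c \<in> {-1,1}"
    using assms by (rule signed_permsE)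
  then show ?thesis by (auto simp: power2_eq_square algebra_simps)
qed

lemma sp_apply_adj: assumes "g \<in> signed_perms" "sod_adj P Q" shows "sod_adj (sp_apply g P) (sp_apply g Q)"
proof -
  obtain x y z x' y' z' where PQ: "P = (x,y,z)" "Q = (x',y',z')" by (cases P, cases Q)
  then show ?thesis
    using assms sp_apply_sq_dist[OF assms(1), of x y z x' y' z'] sp_apply_sodV[OF assms(1)]
    unfolding sod_adj_def by (auto split: prod.splits simp: power2_commute)
qed

lemma sp_offset_ge: "g \<in> signed_perms \<Longrightarrow> -3 \<le> sp_offset g"
  unfolding signed_perms_def signed_perm_list_def by auto

section \<open>Heights of the orbit of a chamber point\<close>

lemma walk_height2_lower:
  "walk n R \<Longrightarrow> g \<in> signed_perms \<Longrightarrow> height2 (sp_apply (sp_inv g) R) + 2 * sp_offset g \<le> 2 * int n"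
proof (induction n R arbitrary: g rule: walk.induct)
  case walk0
  then show ?case
    unfolding signed_perms_def signed_perm_list_def sodO_def by (auto simp: height_corr_def)
next
  case (walkS n P Q)
  have "height2 (sp_apply (sp_inv g) Q) \<le> height2 (sp_apply (sp_inv g) P) + 2"
    using walkS.hyps(2) walkS.prems by (intro height2_adj_le sp_apply_adj sp_inv_mem)
  then show ?case using walkS.IH[OF walkS.prems] by simp
qed

fun is_sod_path :: "pt list \<Rightarrow> bool" where
  "is_sod_path (P # Q # Ps) = (sod_adj P Q \<and> is_sod_path (Q # Ps))"
| "is_sod_path _ = True"

lemma walk_along_path:
  "walk n P \<Longrightarrow> is_sod_path (P # Ps) \<Longrightarrow> i \<le> length Ps \<Longrightarrow> walk (n + i) ((P # Ps) ! i)"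
proof (induction Ps arbitrary: n P i)
  case (Cons Q Ps)
  show ?case
  proof (cases i)
    case (Suc j)
    have "walk (Suc n) Q" using Cons.prems(1,2) by (auto intro: walkS)
    then show ?thesis using Cons.IH[of "Suc n" Q j] Cons.prems(2,3) Suc by simp
  qed (use Cons.prems in simp)
qed simp

text \<open>Shortest paths from \<open>O\<close> on which every image \<open>g (2,1,0)\<close> occurs, at position
  \<open>3 + sp_offset g\<close>.\<close>

definition base_geodesics :: "pt list list" where
  "base_geodesics =
    [[(0,1,2),(1,0,2),(2,0,1),(2,-1,0)],
     [(0,1,2),(0,2,1),(1,2,0),(2,1,0),(2,0,-1)],
     [(0,1,2),(0,2,1),(-1,2,0),(0,2,-1),(0,1,-2),(1,0,-2)],
     [(0,1,2),(-1,0,2),(0,-1,2),(0,-2,1),(1,-2,0)],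
     [(0,1,2),(-1,0,2),(-2,0,1),(-2,1,0)],
     [(0,1,2),(-1,0,2),(-2,0,1),(-2,-1,0),(-1,-2,0),(0,-2,-1)],
     [(0,1,2),(-1,0,2),(-2,0,1),(-2,-1,0),(-2,0,-1),(-1,0,-2),(0,-1,-2)]]"

lemma walk_base_geodesics:
  assumes "(i,P) \<in> (\<Union>Ps\<in>set base_geodesics. set (enumerate 0 Ps))"
  shows "walk i P"
proof -
  obtain Ps where Ps: "Ps \<in> set base_geodesics" "(i,P) \<in> set (enumerate 0 Ps)" using assms by blast
  have "walk 0 sodO" by (rule walk0) (simp add: sodO_def sodV_def)
  moreover have "\<exists>Qs. Ps = sodO # Qs \<and> is_sod_path Ps" using Ps(1)
    unfolding base_geodesics_def sodO_def by (auto simp: sod_adj_def sodV_def)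
  moreover have "i < length Ps" "P = Ps ! i" using Ps(2) by (auto simp: in_set_enumerate_eq)
  ultimately show ?thesis using walk_along_path[of 0 sodO _ i] by fastforce
qed

lemma walk_base_orbit: "g \<in> signed_perms \<Longrightarrow> walk (nat (3 + sp_offset g)) (sp_apply g (2,1,0))"
  unfolding signed_perms_def signed_perm_list_def
  by (auto intro!: walk_base_geodesics simp: base_geodesics_def)


lemma walk_to_orbit:
  assumes "P \<in> chamber" "g \<in> signed_perms"
  shows "walk (nat (height2 P div 2 + sp_offset g)) (sp_apply g P)"
  using assms
proof (induction "nat (height2 P)" arbitrary: P rule: less_induct)
  case less
  obtain x y z where P: "P = (x,y,z)" by (cases P)
  show ?case
  proof (cases "P = (2,1,0)")
    case True
    then show ?thesis using walk_base_orbit[OF less.prems(2)] by (simp add: height_corr_def)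
  next
    case False
    obtain Q where Q: "Q \<in> chamber" "sod_adj Q P" "height2 Q = height2 P - 2"
      using chamber_descent less.prems(1) False unfolding P by blast
    have Q6: "6 \<le> height2 Q" using Q(1) height2_chamber_ge by (cases Q) blast
    have "walk (nat (height2 Q div 2 + sp_offset g)) (sp_apply g Q)"
      using Q(1,3) Q6 less.prems(2) by (intro less.hyps) auto
    then have "walk (Suc (nat (height2 Q div 2 + sp_offset g))) (sp_apply g P)"
      using sp_apply_adj[OF less.prems(2) Q(2)] by (rule walkS)
    moreover have "Suc (nat (height2 Q div 2 + sp_offset g)) = nat (height2 P div 2 + sp_offset g)"
      using Q(3) Q6 sp_offset_ge[OF less.prems(2)] by simp
    ultimately show ?thesis by simp
  qed
qed

lemma dis_eq_orbit_iff:
  assumes P: "P \<in> chamber" and g: "g \<in> signed_perms"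
  shows "dis_eq (sp_apply g P) n \<longleftrightarrow> 2 * n = height2 P + 2 * sp_offset g"
proof -
  define k where "k = height2 P div 2 + sp_offset g"
  have k2: "2 * k = height2 P + 2 * sp_offset g" unfolding k_def using height2_even[of P] by simp
  have k0: "0 \<le> k" unfolding k_def using height2_chamber_ge P sp_offset_ge[OF g] by (cases P) fastforce
  have walk_k: "walk (nat k) (sp_apply g P)" unfolding k_def using P g by (rule walk_to_orbit)
  have k_le: "k \<le> int m" if "walk m (sp_apply g P)" for m
    using walk_height2_lower[OF that g] sp_inv_apply[OF g] k2 by simp
  have "dis_eq (sp_apply g P) n \<longleftrightarrow> n = k"
  proof
    assume "dis_eq (sp_apply g P) n"
    then have "0 \<le> n" "walk (nat n) (sp_apply g P)" "\<not> nat k < nat n"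
      using walk_k unfolding dis_eq_def by auto
    then show "n = k" using k_le k0 by fastforce
  next
    assume "n = k"
    moreover have "\<not> walk m (sp_apply g P)" if "m < nat k" for m
      using that k_le by fastforce
    ultimately show "dis_eq (sp_apply g P) n" unfolding dis_eq_def using k0 walk_k by blast
  qed
  then show ?thesis using k2 by linarith
qed


section \<open>Counting orbit by orbit\<close>

text \<open>A chamber point with \<open>z = 0\<close> is fixed by the sign change of \<open>z\<close>; since \<open>sign1 0 = 1\<close>,
  \<open>chamber_perm\<close> selects the representation with \<open>sp_zsign = 1\<close>.\<close>

definition sign1 :: "int \<Rightarrow> int" where
  "sign1 t = (if t < 0 then -1 else 1)"

fun chamber_rep :: "pt \<Rightarrow> pt" where
  "chamber_rep (u,v,w) =
    (max \<bar>u\<bar> (max \<bar>v\<bar> \<bar>w\<bar>),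
     \<bar>u\<bar> + \<bar>v\<bar> + \<bar>w\<bar> - max \<bar>u\<bar> (max \<bar>v\<bar> \<bar>w\<bar>) - min \<bar>u\<bar> (min \<bar>v\<bar> \<bar>w\<bar>),
     min \<bar>u\<bar> (min \<bar>v\<bar> \<bar>w\<bar>))"

fun chamber_perm :: "pt \<Rightarrow> signed_perm" where
  "chamber_perm (u,v,w) =
    ((if \<bar>u\<bar> > \<bar>v\<bar> \<and> \<bar>v\<bar> > \<bar>w\<bar> then 0 else if \<bar>u\<bar> > \<bar>w\<bar> \<and> \<bar>w\<bar> > \<bar>v\<bar> then 1
      else if \<bar>v\<bar> > \<bar>u\<bar> \<and> \<bar>u\<bar> > \<bar>w\<bar> then 2 else if \<bar>w\<bar> > \<bar>u\<bar> \<and> \<bar>u\<bar> > \<bar>v\<bar> then 3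
      else if \<bar>v\<bar> > \<bar>w\<bar> \<and> \<bar>w\<bar> > \<bar>u\<bar> then 4 else 5),
     sign1 u, sign1 v, sign1 w)"

lemma sign1_mult_abs: "sign1 t * \<bar>t\<bar> = t"
  by (simp add: sign1_def)

lemma chamber_perm_mem: "chamber_perm R \<in> signed_perms"
  by (cases R) (auto simp: signed_perms_def signed_perm_list_def sign1_def)

lemma sp_apply_chamber_perm:
  assumes "R \<in> sodV"
  shows "sp_apply (chamber_perm R) (chamber_rep R) = R"
    and "sp_zsign (chamber_perm R) = -1 \<Longrightarrow> snd (snd (chamber_rep R)) \<noteq> 0"
proof -
  obtain u v w where R: "R = (u,v,w)" by (cases R)
  have "\<bar>u\<bar> \<noteq> \<bar>v\<bar>" "\<bar>v\<bar> \<noteq> \<bar>w\<bar>" "\<bar>u\<bar> \<noteq> \<bar>w\<bar>" using sodV_abs_distinct assms R by auto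
  then consider "\<bar>u\<bar> > \<bar>v\<bar> \<and> \<bar>v\<bar> > \<bar>w\<bar>" | "\<bar>u\<bar> > \<bar>w\<bar> \<and> \<bar>w\<bar> > \<bar>v\<bar>" | "\<bar>v\<bar> > \<bar>u\<bar> \<and> \<bar>u\<bar> > \<bar>w\<bar>"
    | "\<bar>w\<bar> > \<bar>u\<bar> \<and> \<bar>u\<bar> > \<bar>v\<bar>" | "\<bar>v\<bar> > \<bar>w\<bar> \<and> \<bar>w\<bar> > \<bar>u\<bar>" | "\<bar>w\<bar> > \<bar>v\<bar> \<and> \<bar>v\<bar> > \<bar>u\<bar>"
    by linarith
  then have "sp_apply (chamber_perm R) (chamber_rep R) = R \<and>
      (sp_zsign (chamber_perm R) = -1 \<longrightarrow> snd (snd (chamber_rep R)) \<noteq> 0)"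
    unfolding R by cases (auto simp: max_def min_def sign1_mult_abs sign1_def)
  then show "sp_apply (chamber_perm R) (chamber_rep R) = R"
    and "sp_zsign (chamber_perm R) = -1 \<Longrightarrow> snd (snd (chamber_rep R)) \<noteq> 0" by auto
qed

lemma chamber_rep_mem: assumes "R \<in> sodV" shows "chamber_rep R \<in> chamber"
proof -
  have "chamber_rep R = sp_apply (sp_inv (chamber_perm R)) R"
    using sp_inv_apply[OF chamber_perm_mem] sp_apply_chamber_perm(1)[OF assms] by metis
  then have "chamber_rep R \<in> sodV"
    using sp_apply_sodV[OF sp_inv_mem[OF chamber_perm_mem] assms] by simp
  moreover have "chamber_rep R \<in> sodU" by (cases R) (auto simp: sodU_def max_def min_def)
  ultimately show ?thesis by simp
qed

lemma chamber_perm_sp_apply: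
  assumes "g \<in> signed_perms" "(x,y,z) \<in> chamber" "sp_zsign g = -1 \<Longrightarrow> z \<noteq> 0"
  shows "chamber_perm (sp_apply g (x,y,z)) = g"
proof -
  obtain p a b c where g: "g = (p,a,b,c)" "p \<in> {0,1,2,3,4,5}" "a \<in> {-1,1}" "b \<in> {-1,1}" "c \<in> {-1,1}"
    using assms(1) by (rule signed_permsE)
  have "y < x" "z < y" "0 \<le> z" using chamber_strict assms(2) by auto
  then show ?thesis using g(2-5) assms(3) unfolding g(1) by (elim insertE emptyE) (auto simp: sign1_def)
qed


lemma finite_chamber_height: "finite {P \<in> chamber. height2 P = k}"
proof (rule finite_subset)
  show "{P \<in> chamber. height2 P = k} \<subseteq> {0..k} \<times> {0..k} \<times> {0..k}"
  proof
    fix P assume "P \<in> {P \<in> chamber. height2 P = k}"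
    then obtain x y z where P: "P = (x,y,z)" "(x,y,z) \<in> chamber" "height2 (x,y,z) = k"
      by (cases P) auto
    have "y < x" "z < y" "0 \<le> z" using chamber_strict P(2) by auto
    moreover have "2*x + y - 1 \<le> k" using P(3) by (auto simp: height_corr_def)
    ultimately show "P \<in> {0..k} \<times> {0..k} \<times> {0..k}" using P(1) by auto
  qed
qed simp

lemma sphere_perm_slice:
  assumes "g \<in> signed_perms"
  shows "{R \<in> sodV. dis_eq R n \<and> \<Phi> R \<and> chamber_perm R = g}
    = sp_apply g ` {P \<in> chamber. 2 * n = height2 P + 2 * sp_offset g \<and> \<Phi> (sp_apply g P)
                                 \<and> (sp_zsign g = -1 \<longrightarrow> snd (snd P) \<noteq> 0)}"
    (is "?L = sp_apply g ` ?B")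
proof
  show "?L \<subseteq> sp_apply g ` ?B"
  proof
    fix R assume R: "R \<in> ?L"
    then have RV: "R \<in> sodV" and g: "chamber_perm R = g" by auto
    have rep: "chamber_rep R \<in> chamber" "sp_apply g (chamber_rep R) = R"
      "sp_zsign g = -1 \<longrightarrow> snd (snd (chamber_rep R)) \<noteq> 0"
      using chamber_rep_mem[OF RV] sp_apply_chamber_perm[OF RV] g by auto
    then have "2 * n = height2 (chamber_rep R) + 2 * sp_offset g"
      using dis_eq_orbit_iff[OF rep(1) assms] R by auto
    then show "R \<in> sp_apply g ` ?B" using rep R by (intro image_eqI[of _ _ "chamber_rep R"]) auto
  qed
next
  show "sp_apply g ` ?B \<subseteq> ?L"
  proof
    fix R assume "R \<in> sp_apply g ` ?B"
    then obtain x y z where B: "R = sp_apply g (x,y,z)" "(x,y,z) \<in> ?B" by auto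
    then have "chamber_perm R = g" using chamber_perm_sp_apply[OF assms] by auto
    moreover have "R \<in> sodV" using sp_apply_sodV[OF assms] B by auto
    moreover have "dis_eq R n" using dis_eq_orbit_iff[OF _ assms] B by auto
    ultimately show "R \<in> ?L" using B by auto
  qed
qed

lemma card_sphere_eq_sum:
  "card {R \<in> sodV. dis_eq R n \<and> \<Phi> R} =
    (\<Sum>g\<in>signed_perms. card {P \<in> chamber. 2 * n = height2 P + 2 * sp_offset g \<and> \<Phi> (sp_apply g P)
                                          \<and> (sp_zsign g = -1 \<longrightarrow> snd (snd P) \<noteq> 0)})"
proof -
  let ?B = "\<lambda>g. {P \<in> chamber. 2 * n = height2 P + 2 * sp_offset g \<and> \<Phi> (sp_apply g P)
                             \<and> (sp_zsign g = -1 \<longrightarrow> snd (snd P) \<noteq> 0)}"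
  let ?L = "\<lambda>g. {R \<in> sodV. dis_eq R n \<and> \<Phi> R \<and> chamber_perm R = g}"
  have fin_B: "finite (?B g)" for g
    by (rule finite_subset[OF _ finite_chamber_height[of "2 * n - 2 * sp_offset g"]]) auto
  have fin_L: "finite (?L g)" if "g \<in> signed_perms" for g
    using sphere_perm_slice[OF that] fin_B by simp
  have inj: "inj_on (sp_apply g) X" if "g \<in> signed_perms" for g X
    using sp_inv_apply[OF that] by (rule inj_on_inverseI)
  have "{R \<in> sodV. dis_eq R n \<and> \<Phi> R} = (\<Union>g\<in>signed_perms. ?L g)"
    using chamber_perm_mem by blast
  moreover have "card (\<Union>g\<in>signed_perms. ?L g) = (\<Sum>g\<in>signed_perms. card (?L g))"
    by (rule card_UN_disjoint) (use fin_L in \<open>auto simp: signed_perms_def\<close>)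
  ultimately have "card {R \<in> sodV. dis_eq R n \<and> \<Phi> R} = (\<Sum>g\<in>signed_perms. card (?L g))"
    by simp
  also have "\<dots> = (\<Sum>g\<in>signed_perms. card (?B g))"
    using sphere_perm_slice by (intro sum.cong) (simp_all add: card_image inj)
  finally show ?thesis .
qed


definition chamber_sphere :: "int \<Rightarrow> pt set" where
  "chamber_sphere m = {P \<in> chamber. 2 * m = height2 P}"

lemma finite_chamber_sphere: "finite (chamber_sphere m)"
  unfolding chamber_sphere_def
  by (rule finite_subset[OF _ finite_chamber_height[of "2 * m"]]) auto

lemma sp_apply_id: "sp_apply (0,1,1,1) P = P"
  by (cases P) simp

lemma id_mem_signed_perms: "(0,1,1,1) \<in> signed_perms"
  unfolding signed_perms_def signed_perm_list_def by simp

lemma dis_eq_chamber_iff: "P \<in> chamber \<Longrightarrow> dis_eq P m \<longleftrightarrow> 2 * m = height2 P"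
  using dis_eq_orbit_iff[OF _ id_mem_signed_perms] by (simp add: sp_apply_id)

lemma S2_eq_card: "S2 m = card (chamber_sphere m)"
proof -
  have "{P \<in> chamber. dis_eq P m} = chamber_sphere m"
    unfolding chamber_sphere_def using dis_eq_chamber_iff by blast
  then show ?thesis unfolding S2_def by simp
qed

definition coord_product :: "pt \<Rightarrow> int" where
  "coord_product P = fst P * fst (snd P) * snd (snd P)"

lemma coord_product_chamber_iff:
  assumes "P \<in> chamber" shows "coord_product P = 0 \<longleftrightarrow> snd (snd P) = 0"
proof -
  obtain x y z where P: "P = (x,y,z)" by (cases P)
  then have "y < x" "z < y" "0 \<le> z" using chamber_strict assms by auto
  then show ?thesis unfolding P coord_product_def by auto
qed

lemma coord_product_sp_apply:
  assumes "g \<in> signed_perms" shows "coord_product (sp_apply g P) = 0 \<longleftrightarrow> coord_product P = 0"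
proof -
  obtain p a b c where "g = (p,a,b,c)" "p \<in> {0,1,2,3,4,5}" "a \<in> {-1,1}" "b \<in> {-1,1}" "c \<in> {-1,1}"
    using assms by (rule signed_permsE)
  then show ?thesis by (cases P) (auto simp: coord_product_def)
qed

lemma Sbar1_eq_card: "Sbar1 m = card {P \<in> chamber_sphere m. snd (snd P) = 0}"
proof -
  have "{P \<in> chamber. dis_eq P m \<and> coord_product P = 0} = {P \<in> chamber_sphere m. snd (snd P) = 0}"
    unfolding chamber_sphere_def using dis_eq_chamber_iff coord_product_chamber_iff by blast
  then show ?thesis unfolding Sbar1_def coord_product_def[symmetric] by simp
qed

lemma S_eq_sum:
  "real (S n) = (\<Sum>g\<in>signed_perms. real (S2 (n - sp_offset g)))
              - (\<Sum>g\<in>signed_perms. of_bool (sp_zsign g = -1) * real (Sbar1 (n - sp_offset g)))"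
proof -
  let ?Z = "\<lambda>m. {P \<in> chamber_sphere m. snd (snd P) = 0}"
  have "real (S n) = (\<Sum>g\<in>signed_perms. real (card {P \<in> chamber. 2 * n = height2 P + 2 * sp_offset g
                                             \<and> (sp_zsign g = -1 \<longrightarrow> snd (snd P) \<noteq> 0)}))"
    unfolding S_def using card_sphere_eq_sum[of n "\<lambda>_. True"] by simp
  also have "\<dots> = (\<Sum>g\<in>signed_perms. real (card (chamber_sphere (n - sp_offset g)))
                   - of_bool (sp_zsign g = -1) * real (card (?Z (n - sp_offset g))))"
  proof (rule sum.cong)
    fix g
    have "{P \<in> chamber. 2 * n = height2 P + 2 * sp_offset g \<and> (sp_zsign g = -1 \<longrightarrow> snd (snd P) \<noteq> 0)}
        = chamber_sphere (n - sp_offset g) - (if sp_zsign g = -1 then ?Z (n - sp_offset g) else {})"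
      by (auto simp: chamber_sphere_def algebra_simps)
    moreover have "card (chamber_sphere m - ?Z m) = real (card (chamber_sphere m)) - real (card (?Z m))" for m
      using finite_chamber_sphere[of m] by (simp add: card_Diff_subset of_nat_diff card_mono)
    ultimately show "real (card {P \<in> chamber. 2 * n = height2 P + 2 * sp_offset g \<and> (sp_zsign g = -1 \<longrightarrow> snd (snd P) \<noteq> 0)})
        = real (card (chamber_sphere (n - sp_offset g))) - of_bool (sp_zsign g = -1) * real (card (?Z (n - sp_offset g)))"
      by simp
  qed simp
  finally show ?thesis unfolding S2_eq_card Sbar1_eq_card sum_subtractf .
qed

lemma Sbar_eq_sum:
  "real (Sbar n) = (\<Sum>g\<in>signed_perms. of_bool (sp_zsign g \<noteq> -1) * real (Sbar1 (n - sp_offset g)))"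
proof -
  have "{P \<in> chamber. 2 * n = height2 P + 2 * sp_offset g \<and> coord_product (sp_apply g P) = 0
            \<and> (sp_zsign g = -1 \<longrightarrow> snd (snd P) \<noteq> 0)}
      = (if sp_zsign g = -1 then {} else {P \<in> chamber_sphere (n - sp_offset g). snd (snd P) = 0})"
    if "g \<in> signed_perms" for g
    using coord_product_sp_apply[OF that] coord_product_chamber_iff
    by (auto simp: chamber_sphere_def algebra_simps)
  then show ?thesis
    unfolding Sbar_def coord_product_def[symmetric] card_sphere_eq_sum Sbar1_eq_card of_nat_sum
    by (intro sum.cong refl) simp
qed

theorem lemma3:
  shows "\<exists>J :: int set. \<exists>a b c :: int \<Rightarrow> real. finite J \<and>
    (\<forall>n::int. real (Sbar n) = (\<Sum>j\<in>J. a j * real (Sbar1 (n+j))) \<and>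
              real (S n) = (\<Sum>j\<in>J. b j * real (Sbar1 (n+j))) + (\<Sum>j\<in>J. c j * real (S2 (n+j))))"
proof -
  define J where "J = uminus ` sp_offset ` signed_perms"
  define fiber where "fiber j = {g \<in> signed_perms. - sp_offset g = j}" for j
  define a :: "int \<Rightarrow> real" where "a j = (\<Sum>g\<in>fiber j. of_bool (sp_zsign g \<noteq> -1))" for j
  define b :: "int \<Rightarrow> real" where "b j = - (\<Sum>g\<in>fiber j. of_bool (sp_zsign g = -1))" for j
  define c :: "int \<Rightarrow> real" where "c j = real (card (fiber j))" for j
  have fin: "finite signed_perms" unfolding signed_perms_def by simp
  have "real (Sbar n) = (\<Sum>j\<in>J. a j * real (Sbar1 (n+j)))" for n
    unfolding Sbar_eq_sum J_def a_def fiber_def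
    by (rule sum_group_by_shift[OF fin, where F="\<lambda>m. real (Sbar1 m)"])
  moreover have "real (S n) = (\<Sum>j\<in>J. b j * real (Sbar1 (n+j))) + (\<Sum>j\<in>J. c j * real (S2 (n+j)))" for n
    using S_eq_sum[of n]
      sum_group_by_shift[OF fin, where w="\<lambda>_. 1" and F="\<lambda>m. real (S2 m)" and h=sp_offset and n=n]
      sum_group_by_shift[OF fin, where w="\<lambda>g. of_bool (sp_zsign g = -1)" and F="\<lambda>m. real (Sbar1 m)" and h=sp_offset and n=n]
    unfolding J_def b_def c_def fiber_def by (simp add: sum_negf)
  moreover have "finite J" unfolding J_def using fin by simp
  ultimately show ?thesis by blast
qed

end
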